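(* Let $n\ge1$, let $\lambda,k$ be constants, and let $\phi$ be a smooth function on an open interval $I$ with $\phi>0$ and $\phi'>0$ on $I$ satisfying $$\frac{(\phi^2)''}{(\phi^2)'}=-2\lambda\phi^n+k\phi'.$$ On $M=\mathcal H_{2n+1}\times I$ consider the metric $$g=\sum_{i=1}^n\phi(q)(\sigma_i^2+\rho_i^2)+\frac{\phi'(q)}{\phi(q)^{n-1}}\zeta^2+\phi(q)^{n-1}\phi'(q)\,dq^2$$ and the almost complex structure $J$ with $JX_i=Y_i$, $JY_i=-X_i$, $J\partial_q=\phi^{n-1}Z$, $JZ=-\phi^{1-n}\partial_q$. Then $(g,J)$ is Kähler with Kähler form $\omega=d(\phi\zeta)$, and $g$ is a gradient Kähler-Ricci soliton, $\mathrm{Ric}+\nabla df=\lambda g$, with potential $f=k\phi$ (up to an additive constant).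
   Context: $\mathcal H_{2n+1}$ is the $(2n+1)$-dimensional Heisenberg group, identified with $\mathbb R^{2n+1}$ with global coordinates $(x_1,\dots,x_n,y_1,\dots,y_n,z)$ so that the vector fields $X_i=\partial_{x_i}$, $Y_i=\partial_{y_i}+x_i\partial_z$, $Z=-\partial_z$ are left-invariant; the dual left-invariant coframe is $\sigma_i=dx_i$, $\rho_i=dy_i$, $\zeta=\sum_{i=1}^n x_i\,dy_i-dz$. The variable $q$ is the coordinate on $I$, and the prime denotes $d/dq$. $\mathcal H_{2n+1}$ acts on $M$ by left multiplication on the first factor, isometrically and with cohomogeneity one. *)

theory Defs
  imports "HOL-Analysis.Analysis"
begin

(* Coordinates on R^N are functions p :: nat => real; only p 0 .. p (N-1) matter. *)

definition smooth_on :: "real set \<Rightarrow> (real \<Rightarrow> real) \<Rightarrow> bool" where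
  "smooth_on I f \<longleftrightarrow> (\<forall>k. \<forall>x\<in>I. ((deriv ^^ k) f) differentiable (at x))"

definition pd :: "nat \<Rightarrow> ((nat \<Rightarrow> real) \<Rightarrow> real) \<Rightarrow> (nat \<Rightarrow> real) \<Rightarrow> real" where
  "pd i F p = deriv (\<lambda>t. F (p(i := t))) (p i)"

type_synonym metric = "(nat \<Rightarrow> real) \<Rightarrow> nat \<Rightarrow> nat \<Rightarrow> real"

definition inv_metric :: "nat \<Rightarrow> metric \<Rightarrow> metric" where
  "inv_metric N g p = (SOME B. \<forall>a<N. \<forall>b<N.
      (\<Sum>d<N. g p a d * B d b) = (if a = b then 1 else 0))"

definition christoffel :: "nat \<Rightarrow> metric \<Rightarrow> nat \<Rightarrow> nat \<Rightarrow> nat \<Rightarrow> (nat \<Rightarrow> real) \<Rightarrow> real" where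
  "christoffel N g c a b p = (\<Sum>d<N. inv_metric N g p c d *
      (pd a (\<lambda>x. g x b d) p + pd b (\<lambda>x. g x a d) p - pd d (\<lambda>x. g x a b) p)) / 2"

definition ricci :: "nat \<Rightarrow> metric \<Rightarrow> metric" where
  "ricci N g p b c =
     (\<Sum>a<N. pd a (\<lambda>x. christoffel N g a b c x) p)
   - (\<Sum>a<N. pd c (\<lambda>x. christoffel N g a a b x) p)
   + (\<Sum>a<N. \<Sum>d<N. christoffel N g a a d p * christoffel N g d b c p
                   - christoffel N g a c d p * christoffel N g d a b p)"

definition hessian :: "nat \<Rightarrow> metric \<Rightarrow> ((nat \<Rightarrow> real) \<Rightarrow> real) \<Rightarrow> metric" where
  "hessian N g f p a b = pd a (\<lambda>x. pd b f x) p - (\<Sum>c<N. christoffel N g c a b p * pd c f p)"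

(* a (1,1)-tensor J: J p c b = c-th component of J(d/dx_b) *)
definition nabla_J :: "nat \<Rightarrow> metric \<Rightarrow> metric \<Rightarrow> nat \<Rightarrow> nat \<Rightarrow> nat \<Rightarrow> (nat \<Rightarrow> real) \<Rightarrow> real" where
  "nabla_J N g J a c b p = pd a (\<lambda>x. J x c b) p
     + (\<Sum>d<N. christoffel N g c a d p * J p d b)
     - (\<Sum>d<N. christoffel N g d a b p * J p c d)"

definition is_kaehler :: "nat \<Rightarrow> (nat \<Rightarrow> real) set \<Rightarrow> metric \<Rightarrow> metric \<Rightarrow> bool" where
  "is_kaehler N D g J \<longleftrightarrow> (\<forall>p\<in>D.
      (\<forall>a<N. \<forall>b<N. g p a b = g p b a)
    \<and> (\<forall>v. (\<exists>a<N. v a \<noteq> 0) \<longrightarrow> (\<Sum>a<N. \<Sum>b<N. g p a b * v a * v b) > 0)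
    \<and> (\<forall>a<N. \<forall>b<N. (\<Sum>c<N. J p a c * J p c b) = (if a = b then -1 else 0))
    \<and> (\<forall>a<N. \<forall>b<N. (\<Sum>c<N. \<Sum>d<N. J p c a * J p d b * g p c d) = g p a b)
    \<and> (\<forall>a<N. \<forall>b<N. \<forall>c<N. nabla_J N g J a c b p = 0))"

definition kaehler_form :: "nat \<Rightarrow> metric \<Rightarrow> metric \<Rightarrow> metric" where
  "kaehler_form N g J p a b = (\<Sum>c<N. J p c a * g p c b)"

definition ext_d :: "((nat \<Rightarrow> real) \<Rightarrow> nat \<Rightarrow> real) \<Rightarrow> metric" where
  "ext_d \<alpha> p a b = pd a (\<lambda>x. \<alpha> x b) p - pd b (\<lambda>x. \<alpha> x a) p"

(* ---- The Heisenberg model: coordinates x_i = index i (i<n), y_i = index n+i,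
        z = index 2n, q = index 2n+1;  N = 2n+2 ---- *)

definition dvec :: "nat \<Rightarrow> nat \<Rightarrow> real" where
  "dvec j a = (if a = j then 1 else 0)"

definition pair :: "nat \<Rightarrow> (nat \<Rightarrow> real) \<Rightarrow> (nat \<Rightarrow> real) \<Rightarrow> real" where
  "pair N \<theta> v = (\<Sum>a<N. \<theta> a * v a)"

definition qc :: "nat \<Rightarrow> (nat \<Rightarrow> real) \<Rightarrow> real" where
  "qc n p = p (2*n+1)"

(* coframe sigma_i = dx_i, rho_i = dy_i, zeta = sum x_i dy_i - dz *)
definition sigma_h :: "nat \<Rightarrow> nat \<Rightarrow> real" where "sigma_h i = dvec i"
definition rho_h :: "nat \<Rightarrow> nat \<Rightarrow> nat \<Rightarrow> real" where "rho_h n i = dvec (n+i)"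
definition zeta_h :: "nat \<Rightarrow> (nat \<Rightarrow> real) \<Rightarrow> nat \<Rightarrow> real" where
  "zeta_h n p a = (\<Sum>i<n. p i * dvec (n+i) a) - dvec (2*n) a"
definition dq_h :: "nat \<Rightarrow> nat \<Rightarrow> real" where "dq_h n = dvec (2*n+1)"

(* frame X_i = d/dx_i, Y_i = d/dy_i + x_i d/dz, Z = - d/dz, d/dq *)
definition X_h :: "nat \<Rightarrow> nat \<Rightarrow> real" where "X_h i = dvec i"
definition Y_h :: "nat \<Rightarrow> (nat \<Rightarrow> real) \<Rightarrow> nat \<Rightarrow> nat \<Rightarrow> real" where
  "Y_h n p i a = dvec (n+i) a + p i * dvec (2*n) a"
definition Z_h :: "nat \<Rightarrow> nat \<Rightarrow> real" where "Z_h n a = - dvec (2*n) a"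
definition dqv_h :: "nat \<Rightarrow> nat \<Rightarrow> real" where "dqv_h n = dvec (2*n+1)"

definition heis_metric :: "nat \<Rightarrow> (real \<Rightarrow> real) \<Rightarrow> metric" where
  "heis_metric n \<phi> p a b =
     (\<Sum>i<n. \<phi> (qc n p) * (sigma_h i a * sigma_h i b + rho_h n i a * rho_h n i b))
   + deriv \<phi> (qc n p) / \<phi> (qc n p) ^ (n-1) * (zeta_h n p a * zeta_h n p b)
   + \<phi> (qc n p) ^ (n-1) * deriv \<phi> (qc n p) * (dq_h n a * dq_h n b)"

(* J X_i = Y_i, J Y_i = -X_i, J d/dq = phi^(n-1) Z, J Z = - phi^(1-n) d/dq,
   extended linearly via the dual coframe (sigma_i, rho_i, zeta, dq) *)
definition heis_J :: "nat \<Rightarrow> (real \<Rightarrow> real) \<Rightarrow> metric" where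
  "heis_J n \<phi> p c b =
     (let N = 2*n+2; v = dvec b in
      (\<Sum>i<n. pair N (sigma_h i) v * Y_h n p i c - pair N (rho_h n i) v * X_h i c)
      + pair N (zeta_h n p) v * (- (1 / \<phi> (qc n p) ^ (n-1)) * dqv_h n c)
      + pair N (dq_h n) v * (\<phi> (qc n p) ^ (n-1) * Z_h n c))"

end

theory Submission
  imports Defs
begin

(* The proof is a computation in the global coordinates (x, y, z, q). In the coframe
   (sigma, rho, zeta, dq) the metric is diagonal, so its inverse is explicit, and all
   Christoffel symbols are polynomial in the x_i with coefficients depending on q only.
   With them one checks that J is parallel and that g(J., .) = d(phi zeta). The soliton
   equation Ric + Hess f = lam g then reduces entrywise to three identities between functions
   of q, which hold after eliminating the second and third derivatives of phi by the ODE. *)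

section \<open>Partial derivatives in coordinates\<close>

definition pd_differentiable :: "nat \<Rightarrow> ((nat \<Rightarrow> real) \<Rightarrow> real) \<Rightarrow> (nat \<Rightarrow> real) \<Rightarrow> bool" where
  "pd_differentiable i F p \<longleftrightarrow> (\<lambda>t. F (p(i := t))) field_differentiable (at (p i))"

lemma real_differentiable_iff_field_differentiable:
  "(f :: real \<Rightarrow> real) differentiable (at x) \<longleftrightarrow> f field_differentiable (at x)"
  using DERIV_deriv_iff_real_differentiable DERIV_deriv_iff_field_differentiable by blast

lemma field_differentiable_if_has_derivative:
  "(f has_real_derivative D) (at t) \<Longrightarrow> f field_differentiable (at t)"
  unfolding field_differentiable_def by blast

lemma pd_differentiable_const [simp]: "pd_differentiable i (\<lambda>x. c) p"
  by (simp add: pd_differentiable_def)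

lemma pd_const [simp]: "pd i (\<lambda>x. c) p = 0"
  by (simp add: pd_def)

lemma pd_differentiable_coord [simp]: "pd_differentiable i (\<lambda>x. x j) p"
  by (cases "i = j") (simp_all add: pd_differentiable_def field_differentiable_ident)

lemma pd_coord [simp]: "pd i (\<lambda>x. x j) p = (if i = j then 1 else 0)"
  by (cases "i = j") (simp_all add: pd_def)

lemma pd_differentiable_add [simp]:
  "pd_differentiable i F p \<Longrightarrow> pd_differentiable i G p \<Longrightarrow>
     pd_differentiable i (\<lambda>x. F x + G x) p"
  by (simp add: pd_differentiable_def field_differentiable_add)

lemma pd_add [simp]:
  "pd_differentiable i F p \<Longrightarrow> pd_differentiable i G p \<Longrightarrow>
     pd i (\<lambda>x. F x + G x) p = pd i F p + pd i G p"
  by (simp add: pd_differentiable_def pd_def)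

lemma pd_differentiable_diff [simp]:
  "pd_differentiable i F p \<Longrightarrow> pd_differentiable i G p \<Longrightarrow>
     pd_differentiable i (\<lambda>x. F x - G x) p"
  by (simp add: pd_differentiable_def field_differentiable_diff)

lemma pd_diff [simp]:
  "pd_differentiable i F p \<Longrightarrow> pd_differentiable i G p \<Longrightarrow>
     pd i (\<lambda>x. F x - G x) p = pd i F p - pd i G p"
  by (simp add: pd_differentiable_def pd_def)

lemma pd_differentiable_minus [simp]:
  "pd_differentiable i F p \<Longrightarrow> pd_differentiable i (\<lambda>x. - F x) p"
  by (simp add: pd_differentiable_def field_differentiable_minus)

lemma pd_minus [simp]: "pd_differentiable i F p \<Longrightarrow> pd i (\<lambda>x. - F x) p = - pd i F p"
  by (simp add: pd_differentiable_def pd_def)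

lemma pd_differentiable_mult [simp]:
  "pd_differentiable i F p \<Longrightarrow> pd_differentiable i G p \<Longrightarrow>
     pd_differentiable i (\<lambda>x. F x * G x) p"
  by (simp add: pd_differentiable_def field_differentiable_mult)

lemma pd_mult [simp]:
  "pd_differentiable i F p \<Longrightarrow> pd_differentiable i G p \<Longrightarrow>
     pd i (\<lambda>x. F x * G x) p = F p * pd i G p + pd i F p * G p"
  by (simp add: pd_differentiable_def pd_def)

lemma pd_differentiable_if [simp]:
  "pd_differentiable i F p \<Longrightarrow> pd_differentiable i G p \<Longrightarrow>
     pd_differentiable i (\<lambda>x. if C then F x else G x) p"
  by (cases C) (simp_all only: if_True if_False)

lemma pd_if [simp]: "pd i (\<lambda>x. if C then F x else G x) p = (if C then pd i F p else pd i G p)"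
  by (cases C) (simp_all only: if_True if_False)

lemma pd_differentiable_sum [simp]:
  "(\<And>j. pd_differentiable i (F j) p) \<Longrightarrow> pd_differentiable i (\<lambda>x. \<Sum>j\<in>A. F j x) p"
  unfolding pd_differentiable_def by (rule field_differentiable_sum) auto

lemma pd_sum [simp]:
  "(\<And>j. pd_differentiable i (F j) p) \<Longrightarrow> pd i (\<lambda>x. \<Sum>j\<in>A. F j x) p = (\<Sum>j\<in>A. pd i (F j) p)"
  unfolding pd_differentiable_def pd_def by (rule deriv_sum) auto

lemma pd_differentiable_comp_coord:
  "h field_differentiable (at (p j)) \<Longrightarrow> pd_differentiable i (\<lambda>x. h (x j)) p"
  by (cases "i = j") (simp_all add: pd_differentiable_def)

lemma pd_comp_coord:
  "h field_differentiable (at (p j)) \<Longrightarrow> pd i (\<lambda>x. h (x j)) p = (if i = j then deriv h (p j) else 0)"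
  by (cases "i = j") (simp_all add: pd_def)

lemma pd_cong_open:
  assumes "open I" "p j \<in> I" "\<And>x. x j \<in> I \<Longrightarrow> F x = G x"
  shows "pd i F p = pd i G p"
proof -
  have "eventually (\<lambda>t. (p(i := t)) j \<in> I) (nhds (p i))"
    using eventually_nhds_in_open[OF assms(1,2)] assms(2) by (cases "i = j") simp_all
  then show ?thesis
    unfolding pd_def by (rule deriv_cong_ev[OF eventually_mono]) (auto simp: assms(3))
qed

lemma if_zero_mult: "(if P then a else 0) * (b :: 'a :: mult_zero) = (if P then a * b else 0)"
  by simp

lemma mult_if_zero: "(b :: 'a :: mult_zero) * (if P then a else 0) = (if P then b * a else 0)"
  by simp

lemma sum_mult_const_right: "(\<Sum>i\<in>A. f i * (g i * c)) = (\<Sum>i\<in>A. f i * g i) * (c :: real)"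
  by (simp add: sum_distrib_right mult.assoc)

lemma sum_mult_const_right3: "(\<Sum>i\<in>A. f i * (g i * (h i * c))) = (\<Sum>i\<in>A. f i * (g i * h i)) * (c :: real)"
  by (simp add: sum_distrib_right mult.assoc)

lemmas sum_normalize = sum_mult_const_right sum_mult_const_right3 sum.distrib sum_subtractf sum_negf
  sum_distrib_left[symmetric] sum_distrib_right[symmetric] sum_divide_distrib[symmetric]
  ring_distribs mult.assoc if_zero_mult mult_if_zero sum.delta sum.delta'

lemma pair_dvec: "pair N \<theta> (dvec b) = (if b < N then \<theta> b else 0)"
  unfolding pair_def dvec_def by (simp add: mult_if_zero sum.delta')

lemma sum_heis_index_split:
  fixes F :: "nat \<Rightarrow> real"
  shows "(\<Sum>a<2*n+2. F a) = (\<Sum>i<n. F i) + (\<Sum>i<n. F (n+i)) + F (2*n) + F (2*n+1)"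
proof -
  have "{..<2*n} = {..<n} \<union> {n..<2*n}" by auto
  then have "(\<Sum>a<2*n. F a) = (\<Sum>i<n. F i) + (\<Sum>a\<in>{n..<2*n}. F a)"
    by (simp add: sum.union_disjoint ivl_disj_int)
  moreover have "(\<Sum>a\<in>{n..<2*n}. F a) = (\<Sum>i<n. F (n+i))"
    using sum.shift_bounds_nat_ivl[of F 0 n n] by (simp add: lessThan_atLeast0 add.commute mult_2)
  ultimately show ?thesis by simp
qed

lemma heis_index_cases [consumes 1, case_names X Y Z Q]:
  fixes a n :: nat
  assumes "a < 2*n+2"
    "\<And>k. k < n \<Longrightarrow> a = k \<Longrightarrow> P" "\<And>k. k < n \<Longrightarrow> a = n+k \<Longrightarrow> P"
    "a = 2*n \<Longrightarrow> P" "a = 2*n+1 \<Longrightarrow> P"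
  shows P
proof -
  consider "a < n" | "n \<le> a \<and> a < 2*n" | "a = 2*n" | "a = 2*n+1" using assms(1) by linarith
  then show P
  proof cases
    case 1 then show ?thesis using assms(2) by blast
  next
    case 2 then show ?thesis using assms(3)[of "a-n"] by auto
  qed (use assms in auto)
qed

lemma inv_metric_eqI:
  assumes right: "\<forall>a<N. \<forall>b<N. (\<Sum>d<N. g p a d * G d b) = (if a = b then 1 else 0)"
    and left: "\<forall>a<N. \<forall>b<N. (\<Sum>d<N. G a d * g p d b) = (if a = b then 1 else 0)"
    and cb: "c < N" "b < N"
  shows "inv_metric N g p c b = G c b"
proof -
  define B where "B = inv_metric N g p"
  have B: "\<forall>a<N. \<forall>b<N. (\<Sum>d<N. g p a d * B d b) = (if a = b then 1 else 0)"
    unfolding B_def inv_metric_def by (rule someI[of _ G]) (use right in auto)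
  have "G c b = (\<Sum>d<N. G c d * (\<Sum>e<N. g p d e * B e b))"
    using B cb by (simp add: mult_if_zero sum.delta)
  also have "\<dots> = (\<Sum>d<N. \<Sum>e<N. G c d * (g p d e * B e b))"
    by (simp only: sum_distrib_left)
  also have "\<dots> = (\<Sum>e<N. \<Sum>d<N. G c d * (g p d e * B e b))"
    by (rule sum.swap)
  also have "\<dots> = (\<Sum>e<N. (\<Sum>d<N. G c d * g p d e) * B e b)"
    by (simp only: sum_distrib_right mult.assoc)
  also have "\<dots> = B c b"
    using left cb by (simp add: if_zero_mult sum.delta)
  finally show ?thesis by (simp add: B_def)
qed

locale heisenberg_profile =
  fixes n :: nat and \<phi> :: "real \<Rightarrow> real" and I :: "real set"
  assumes n_ge_1: "n \<ge> 1" and open_I: "open I" and smooth: "smooth_on I \<phi>"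
    and phi_dphi_pos: "\<forall>q\<in>I. \<phi> q > 0 \<and> deriv \<phi> q > 0"
begin

definition "dphi = deriv \<phi>"
definition "ddphi = deriv dphi"
definition "dddphi = deriv ddphi"
definition "zeta_coef q = dphi q / \<phi> q ^ (n-1)"
definition "dq_coef q = \<phi> q ^ (n-1) * dphi q"
definition "zeta_comp x a =
  (if n \<le> a \<and> a < 2*n then x (a-n) else 0) - (if a = 2*n then 1 else (0::real))"
definition "x_sq_sum x = (\<Sum>i<n. x i * x i)"

lemma phi_pos: "q \<in> I \<Longrightarrow> \<phi> q > 0"
  using phi_dphi_pos by auto

lemma dphi_pos: "q \<in> I \<Longrightarrow> dphi q > 0"
  using phi_dphi_pos by (auto simp: dphi_def)

lemma zeta_coef_pos: "q \<in> I \<Longrightarrow> zeta_coef q > 0"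
  using phi_pos dphi_pos by (simp add: zeta_coef_def)

lemma dq_coef_pos: "q \<in> I \<Longrightarrow> dq_coef q > 0"
  using phi_pos dphi_pos by (simp add: dq_coef_def)

lemma zeta_h_eq: "zeta_h n x a = zeta_comp x a"
proof -
  have "(\<Sum>i<n. x i * dvec (n+i) a) = (if n \<le> a \<and> a < 2*n then x (a-n) else 0)"
  proof (cases "n \<le> a \<and> a < 2*n")
    case True
    then have "(\<Sum>i<n. x i * dvec (n+i) a) = (\<Sum>i<n. if i = a - n then x i else 0)"
      by (intro sum.cong) (auto simp: dvec_def)
    then show ?thesis using True by (simp add: sum.delta) arith
  next
    case False
    then have "(\<Sum>i<n. x i * dvec (n+i) a) = (\<Sum>i<n. 0)"
      by (intro sum.cong) (auto simp: dvec_def)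
    then show ?thesis using False by auto
  qed
  then show ?thesis by (simp add: zeta_h_def zeta_comp_def dvec_def)
qed

lemma heis_metric_eq:
  "heis_metric n \<phi> x a b = \<phi> (x (2*n+1)) * (if a = b \<and> a < 2*n then 1 else 0)
   + zeta_coef (x (2*n+1)) * (zeta_comp x a * zeta_comp x b)
   + dq_coef (x (2*n+1)) * (if a = 2*n+1 \<and> b = 2*n+1 then 1 else 0)"
proof -
  have "(\<Sum>i<n. \<phi> (qc n x) * (sigma_h i a * sigma_h i b + rho_h n i a * rho_h n i b))
     = \<phi> (qc n x) * (\<Sum>i<n. (if i = a then (if i = b then 1 else 0) else 0)
                           + (if i = a - n then (if n \<le> a \<and> a = b then 1 else 0) else 0))"
    unfolding sum_distrib_left by (intro sum.cong) (auto simp: sigma_h_def rho_h_def dvec_def)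
  also have "\<dots> = \<phi> (qc n x) * (if a = b \<and> a < 2*n then 1 else 0)"
    by (simp add: sum.distrib sum.delta) linarith
  finally show ?thesis
    by (simp add: heis_metric_def zeta_h_eq zeta_coef_def dq_coef_def dphi_def dq_h_def dvec_def qc_def)
qed

lemma heis_metric_sym: "heis_metric n \<phi> x a b = heis_metric n \<phi> x b a"
  unfolding heis_metric_eq by (cases "a = b") (auto simp: mult.commute)

lemma deriv_iter_differentiable: "q \<in> I \<Longrightarrow> ((deriv ^^ k) \<phi>) field_differentiable (at q)"
  using smooth unfolding smooth_on_def real_differentiable_iff_field_differentiable by blast

lemma phi_differentiable: "q \<in> I \<Longrightarrow> \<phi> field_differentiable (at q)"
  using deriv_iter_differentiable[of q 0] by simp

lemma dphi_differentiable: "q \<in> I \<Longrightarrow> dphi field_differentiable (at q)"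
  using deriv_iter_differentiable[of q 1] by (simp add: dphi_def)

lemma ddphi_differentiable: "q \<in> I \<Longrightarrow> ddphi field_differentiable (at q)"
  using deriv_iter_differentiable[of q 2] by (simp add: dphi_def ddphi_def numeral_2_eq_2)

lemma zeta_coef_differentiable: "q \<in> I \<Longrightarrow> zeta_coef field_differentiable (at q)"
  unfolding zeta_coef_def[abs_def] using phi_pos[of q]
  by (intro field_differentiable_divide dphi_differentiable field_differentiable_power phi_differentiable)
    auto

lemma dq_coef_differentiable: "q \<in> I \<Longrightarrow> dq_coef field_differentiable (at q)"
  unfolding dq_coef_def[abs_def]
  by (intro field_differentiable_mult dphi_differentiable field_differentiable_power phi_differentiable)

lemmas coef_differentiable = phi_differentiable dphi_differentiable ddphi_differentiable
  zeta_coef_differentiable dq_coef_differentiable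

definition "dzeta_comp c a = (if n \<le> a \<and> a < 2*n \<and> c = a - n then 1 else (0::real))"

definition "dmetric p c a b =
   (if c = 2*n+1 then dphi (p c) * (if a = b \<and> a < 2*n then 1 else 0)
      + deriv zeta_coef (p c) * (zeta_comp p a * zeta_comp p b)
      + deriv dq_coef (p c) * (if a = 2*n+1 \<and> b = 2*n+1 then 1 else 0) else 0)
   + zeta_coef (p (2*n+1)) * (dzeta_comp c a * zeta_comp p b + zeta_comp p a * dzeta_comp c b)"

lemma pd_heis_metric: "p (2*n+1) \<in> I \<Longrightarrow> pd c (\<lambda>x. heis_metric n \<phi> x a b) p = dmetric p c a b"
  unfolding heis_metric_eq zeta_comp_def
  apply (simp add: pd_differentiable_comp_coord pd_comp_coord coef_differentiable)
  apply (simp add: dmetric_def zeta_comp_def dzeta_comp_def dphi_def)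
  apply (intro conjI impI; (simp; fail)?; arith?)
  done

section \<open>Inverse metric and Christoffel symbols\<close>

definition "heis_ginv p a b = (let q = p (2*n+1) in
   (if a = b \<and> a < 2*n then 1 / \<phi> q else 0)
 + (if n \<le> a \<and> a < 2*n \<and> b = 2*n then p (a-n) / \<phi> q else 0)
 + (if a = 2*n \<and> n \<le> b \<and> b < 2*n then p (b-n) / \<phi> q else 0)
 + (if a = 2*n \<and> b = 2*n then x_sq_sum p / \<phi> q + 1 / zeta_coef q else 0)
 + (if a = 2*n+1 \<and> b = 2*n+1 then 1 / dq_coef q else 0))"

lemma heis_metric_ginv:
  assumes q: "p (2*n+1) \<in> I" and ab: "a < 2*n+2" "b < 2*n+2"
  shows "(\<Sum>d<2*n+2. heis_metric n \<phi> p a d * heis_ginv p d b) = (if a = b then 1 else 0)"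
proof -
  have P: "\<phi> (p (2*n+1)) > 0" "zeta_coef (p (2*n+1)) > 0" "dq_coef (p (2*n+1)) > 0"
    using q phi_pos zeta_coef_pos dq_coef_pos by auto
  show ?thesis
    unfolding sum_heis_index_split
    apply (rule heis_index_cases[OF ab(1)]; rule heis_index_cases[OF ab(2)])
    using P apply (simp_all add: heis_metric_eq zeta_comp_def heis_ginv_def Let_def if_zero_mult
        mult_if_zero sum.delta sum.distrib x_sq_sum_def)
    using P apply (simp_all add: sum_normalize)
    using P apply (simp_all add: field_simps)
    done
qed

lemma heis_ginv_sym: "heis_ginv x a b = heis_ginv x b a"
  unfolding heis_ginv_def Let_def by (cases "a = b") auto

lemma inv_metric_heis:
  assumes q: "p (2*n+1) \<in> I" and cb: "c < 2*n+2" "b < 2*n+2"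
  shows "inv_metric (2*n+2) (heis_metric n \<phi>) p c b = heis_ginv p c b"
proof (rule inv_metric_eqI[OF _ _ cb])
  show "\<forall>a<2*n+2. \<forall>b<2*n+2. (\<Sum>d<2*n+2. heis_metric n \<phi> p a d * heis_ginv p d b) = (if a = b then 1 else 0)"
    using heis_metric_ginv[of p, OF q] by blast
  show "\<forall>a<2*n+2. \<forall>b<2*n+2. (\<Sum>d<2*n+2. heis_ginv p a d * heis_metric n \<phi> p d b) = (if a = b then 1 else 0)"
  proof (intro allI impI)
    fix a b assume "a < 2*n+2" "b < 2*n+2"
    then show "(\<Sum>d<2*n+2. heis_ginv p a d * heis_metric n \<phi> p d b) = (if a = b then 1 else 0)"
      using heis_metric_ginv[of p b a, OF q]
      by (simp add: heis_metric_sym heis_ginv_sym mult.commute eq_commute)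
  qed
qed

text \<open>Each Christoffel symbol is one of the following six functions of \<open>q\<close>, up to a polynomial
  factor in the \<open>x\<^sub>i\<close> and a constant.\<close>

definition "Gam1 q = - dphi q / (2 * dq_coef q)"
definition "Gam2 q = zeta_coef q / (2 * \<phi> q)"
definition "Gam3 q = dphi q / (2 * \<phi> q)"
definition "Gam4 q = - deriv zeta_coef q / (2 * dq_coef q)"
definition "Gam5 q = deriv zeta_coef q / (2 * zeta_coef q)"
definition "Gam6 q = deriv dq_coef q / (2 * dq_coef q)"

definition "heis_Gamma p c a b = (let q = p (2*n+1) in
  (if a < n \<and> b < n \<and> a = b \<and> c = 2*n+1 then Gam1 q else 0)
+ (if a < n \<and> n \<le> b \<and> b < 2*n \<and> c = n + a then Gam2 q * p (b-n) else 0)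
+ (if b < n \<and> n \<le> a \<and> a < 2*n \<and> c = n + b then Gam2 q * p (a-n) else 0)
+ (if a < n \<and> n \<le> b \<and> b < 2*n \<and> c = 2*n then Gam2 q * p a * p (b-n) - (if b = n + a then 1/2 else 0) else 0)
+ (if b < n \<and> n \<le> a \<and> a < 2*n \<and> c = 2*n then Gam2 q * p b * p (a-n) - (if a = n + b then 1/2 else 0) else 0)
+ (if a < n \<and> b = 2*n \<and> c = n + a then - Gam2 q else 0)
+ (if b < n \<and> a = 2*n \<and> c = n + b then - Gam2 q else 0)
+ (if a < n \<and> b = 2*n \<and> c = 2*n then - Gam2 q * p a else 0)
+ (if b < n \<and> a = 2*n \<and> c = 2*n then - Gam2 q * p b else 0)
+ (if a < n \<and> b = 2*n+1 \<and> c = a then Gam3 q else 0)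
+ (if b < n \<and> a = 2*n+1 \<and> c = b then Gam3 q else 0)
+ (if n \<le> a \<and> a < 2*n \<and> n \<le> b \<and> b < 2*n \<and> c < n
     then - Gam2 q * ((if c = a-n then p (b-n) else 0) + (if c = b-n then p (a-n) else 0)) else 0)
+ (if n \<le> a \<and> a < 2*n \<and> n \<le> b \<and> b < 2*n \<and> c = 2*n+1
     then Gam1 q * (if a = b then 1 else 0) + Gam4 q * p (a-n) * p (b-n) else 0)
+ (if n \<le> a \<and> a < 2*n \<and> b = 2*n \<and> c = a - n then Gam2 q else 0)
+ (if n \<le> b \<and> b < 2*n \<and> a = 2*n \<and> c = b - n then Gam2 q else 0)
+ (if n \<le> a \<and> a < 2*n \<and> b = 2*n \<and> c = 2*n+1 then - Gam4 q * p (a-n) else 0)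
+ (if n \<le> b \<and> b < 2*n \<and> a = 2*n \<and> c = 2*n+1 then - Gam4 q * p (b-n) else 0)
+ (if a = 2*n \<and> b = 2*n \<and> c = 2*n+1 then Gam4 q else 0)
+ (if a = 2*n+1 \<and> b = 2*n+1 \<and> c = 2*n+1 then Gam6 q else 0)
+ (if a = 2*n+1 \<and> n \<le> b \<and> b < 2*n \<and> c = b then Gam3 q else 0)
+ (if b = 2*n+1 \<and> n \<le> a \<and> a < 2*n \<and> c = a then Gam3 q else 0)
+ (if a = 2*n+1 \<and> n \<le> b \<and> b < 2*n \<and> c = 2*n then (Gam3 q - Gam5 q) * p (b-n) else 0)
+ (if b = 2*n+1 \<and> n \<le> a \<and> a < 2*n \<and> c = 2*n then (Gam3 q - Gam5 q) * p (a-n) else 0)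
+ (if a = 2*n+1 \<and> b = 2*n \<and> c = 2*n then Gam5 q else 0)
+ (if b = 2*n+1 \<and> a = 2*n \<and> c = 2*n then Gam5 q else 0))"

lemma christoffel_heis_sum:
  assumes q: "p (2*n+1) \<in> I" and c: "c < 2*n+2"
  shows "christoffel (2*n+2) (heis_metric n \<phi>) c a b p
     = (\<Sum>d<2*n+2. heis_ginv p c d * (dmetric p a b d + dmetric p b a d - dmetric p d a b)) / 2"
  unfolding christoffel_def
  by (intro arg_cong[where f="\<lambda>x. x / 2"] sum.cong refl)
    (subst inv_metric_heis[of p c, OF q c], simp_all add: pd_heis_metric[of p, OF q])

lemma x_sq_sum_fold: "(\<Sum>i<n. x i * x i) = x_sq_sum x"
  by (simp add: x_sq_sum_def)

lemma christoffel_heis: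
  assumes q: "p (2*n+1) \<in> I" and abc: "c < 2*n+2" "a < 2*n+2" "b < 2*n+2"
  shows "christoffel (2*n+2) (heis_metric n \<phi>) c a b p = heis_Gamma p c a b"
proof -
  have P: "\<phi> (p (2*n+1)) > 0" "zeta_coef (p (2*n+1)) > 0" "dq_coef (p (2*n+1)) > 0"
    using q phi_pos zeta_coef_pos dq_coef_pos by auto
  show ?thesis
    unfolding christoffel_heis_sum[of p c a b, OF q abc(1)] sum_heis_index_split
    apply (rule heis_index_cases[OF abc(1)]; rule heis_index_cases[OF abc(2)];
        rule heis_index_cases[OF abc(3)])
    using P apply (simp_all add: dmetric_def zeta_comp_def dzeta_comp_def heis_ginv_def heis_Gamma_def
        Let_def sum_normalize Gam1_def Gam2_def Gam3_def Gam4_def Gam5_def Gam6_def)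
    using P apply (auto simp: field_simps sum_mult_const_right sum_mult_const_right3 x_sq_sum_fold
        sum_distrib_left[symmetric])
    done
qed

definition "m = n - 1"
definition "phipow t = \<phi> t ^ m"

lemma real_m: "real m = real n - 1"
  using n_ge_1 by (simp add: m_def of_nat_diff)

lemma phi_pow_n: "\<phi> t ^ n = \<phi> t * phipow t"
  using n_ge_1 by (simp add: phipow_def m_def power_Suc[symmetric])

lemma zeta_coef_phipow: "zeta_coef t = dphi t / phipow t"
  by (simp add: zeta_coef_def phipow_def m_def)

lemma dq_coef_phipow: "dq_coef t = phipow t * dphi t"
  by (simp add: dq_coef_def phipow_def m_def)

lemma phipow_pos: "t \<in> I \<Longrightarrow> phipow t > 0"
  using phi_pos by (simp add: phipow_def)

lemma DERIV_phi: "t \<in> I \<Longrightarrow> (\<phi> has_real_derivative dphi t) (at t)"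
  using phi_differentiable[of t] by (simp add: dphi_def DERIV_deriv_iff_field_differentiable)

lemma DERIV_dphi: "t \<in> I \<Longrightarrow> (dphi has_real_derivative ddphi t) (at t)"
  using dphi_differentiable[of t] by (simp add: ddphi_def DERIV_deriv_iff_field_differentiable)

lemma DERIV_ddphi: "t \<in> I \<Longrightarrow> (ddphi has_real_derivative dddphi t) (at t)"
  using ddphi_differentiable[of t] by (simp add: dddphi_def DERIV_deriv_iff_field_differentiable)

definition "dphipow t = real m * phipow t * dphi t / \<phi> t"
definition "dzeta_coef t = ddphi t / phipow t - real m * dphi t ^ 2 / (phipow t * \<phi> t)"
definition "ddq_coef t = real m * phipow t * dphi t ^ 2 / \<phi> t + phipow t * ddphi t"
definition "ddzeta_coef t = dddphi t / phipow t - ddphi t * dphipow t / (phipow t)^2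
   - real m * (2 * dphi t * ddphi t * (phipow t * \<phi> t)
               - dphi t ^ 2 * (dphipow t * \<phi> t + phipow t * dphi t)) / (phipow t * \<phi> t)^2"
definition "dddq_coef t =
   real m * ((dphipow t * dphi t ^ 2 + phipow t * (2 * dphi t * ddphi t)) * \<phi> t
             - phipow t * dphi t ^ 2 * dphi t) / \<phi> t ^ 2
   + dphipow t * ddphi t + phipow t * dddphi t"

lemma DERIV_phipow: "t \<in> I \<Longrightarrow> (phipow has_real_derivative dphipow t) (at t)"
proof -
  assume t: "t \<in> I"
  have "((\<lambda>t. \<phi> t ^ m) has_real_derivative (real m * \<phi> t ^ (m - 1) * dphi t)) (at t)"
    by (auto intro!: derivative_eq_intros DERIV_phi[OF t])
  moreover have "real m * \<phi> t ^ (m - 1) * dphi t = dphipow t"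
    using phi_pos[OF t] by (cases m) (simp_all add: dphipow_def phipow_def)
  ultimately show ?thesis by (simp add: phipow_def[abs_def])
qed

lemma DERIV_zeta_coef: "t \<in> I \<Longrightarrow> (zeta_coef has_real_derivative dzeta_coef t) (at t)"
proof -
  assume t: "t \<in> I"
  note P = phi_pos[OF t] phipow_pos[OF t]
  have "((\<lambda>t. dphi t / phipow t) has_real_derivative
      (ddphi t * phipow t - dphi t * dphipow t) / (phipow t * phipow t)) (at t)"
    using P by (auto intro!: derivative_eq_intros DERIV_dphi[OF t] DERIV_phipow[OF t])
  moreover have "(ddphi t * phipow t - dphi t * dphipow t) / (phipow t * phipow t) = dzeta_coef t"
    using P by (simp add: dzeta_coef_def dphipow_def field_simps power2_eq_square)
  ultimately show ?thesis by (simp add: zeta_coef_phipow[abs_def])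
qed

lemma DERIV_dq_coef: "t \<in> I \<Longrightarrow> (dq_coef has_real_derivative ddq_coef t) (at t)"
proof -
  assume t: "t \<in> I"
  note P = phi_pos[OF t] phipow_pos[OF t]
  have "((\<lambda>t. phipow t * dphi t) has_real_derivative
      (phipow t * ddphi t + dphipow t * dphi t)) (at t)"
    by (auto intro!: derivative_eq_intros DERIV_dphi[OF t] DERIV_phipow[OF t])
  moreover have "phipow t * ddphi t + dphipow t * dphi t = ddq_coef t"
    using P by (simp add: ddq_coef_def dphipow_def field_simps power2_eq_square)
  ultimately show ?thesis by (simp add: dq_coef_phipow[abs_def])
qed

lemma deriv_zeta_coef: "t \<in> I \<Longrightarrow> deriv zeta_coef t = dzeta_coef t"
  using DERIV_zeta_coef DERIV_imp_deriv by blast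

lemma deriv_dq_coef: "t \<in> I \<Longrightarrow> deriv dq_coef t = ddq_coef t"
  using DERIV_dq_coef DERIV_imp_deriv by blast

lemma DERIV_dzeta_coef: "t \<in> I \<Longrightarrow> (dzeta_coef has_real_derivative ddzeta_coef t) (at t)"
proof -
  assume t: "t \<in> I"
  note P = phi_pos[OF t] phipow_pos[OF t]
  show ?thesis
    unfolding dzeta_coef_def[abs_def] ddzeta_coef_def
    using P by (auto intro!: derivative_eq_intros DERIV_dphi[OF t] DERIV_ddphi[OF t]
        DERIV_phipow[OF t] DERIV_phi[OF t] simp: field_simps power2_eq_square)
qed

lemma DERIV_ddq_coef: "t \<in> I \<Longrightarrow> (ddq_coef has_real_derivative dddq_coef t) (at t)"
proof -
  assume t: "t \<in> I"
  note P = phi_pos[OF t] phipow_pos[OF t]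
  show ?thesis
    unfolding ddq_coef_def[abs_def] dddq_coef_def
    using P by (auto intro!: derivative_eq_intros DERIV_dphi[OF t] DERIV_ddphi[OF t]
        DERIV_phipow[OF t] DERIV_phi[OF t] simp: field_simps power2_eq_square)
qed

definition "dGam1 t = -(ddphi t * dq_coef t - dphi t * ddq_coef t) / (2 * dq_coef t ^ 2)"
definition "dGam2 t = (dzeta_coef t * \<phi> t - zeta_coef t * dphi t) / (2 * \<phi> t ^ 2)"
definition "dGam3 t = (ddphi t * \<phi> t - dphi t * dphi t) / (2 * \<phi> t ^ 2)"
definition "dGam4 t = -(ddzeta_coef t * dq_coef t - dzeta_coef t * ddq_coef t) / (2 * dq_coef t ^ 2)"
definition "dGam5 t = (ddzeta_coef t * zeta_coef t - dzeta_coef t * dzeta_coef t) / (2 * zeta_coef t ^ 2)"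
definition "dGam6 t = (dddq_coef t * dq_coef t - ddq_coef t * ddq_coef t) / (2 * dq_coef t ^ 2)"

lemma DERIV_Gam1: "t \<in> I \<Longrightarrow> (Gam1 has_real_derivative dGam1 t) (at t)"
proof -
  assume t: "t \<in> I"
  show ?thesis
    unfolding Gam1_def[abs_def] dGam1_def using phi_pos[OF t] dq_coef_pos[OF t]
    by (auto intro!: derivative_eq_intros DERIV_dphi[OF t] DERIV_dq_coef[OF t] simp: field_simps power2_eq_square)
qed

lemma DERIV_Gam2: "t \<in> I \<Longrightarrow> (Gam2 has_real_derivative dGam2 t) (at t)"
proof -
  assume t: "t \<in> I"
  show ?thesis
    unfolding Gam2_def[abs_def] dGam2_def using phi_pos[OF t]
    by (auto intro!: derivative_eq_intros DERIV_phi[OF t] DERIV_zeta_coef[OF t] simp: field_simps power2_eq_square)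
qed

lemma DERIV_Gam3: "t \<in> I \<Longrightarrow> (Gam3 has_real_derivative dGam3 t) (at t)"
proof -
  assume t: "t \<in> I"
  show ?thesis
    unfolding Gam3_def[abs_def] dGam3_def using phi_pos[OF t]
    by (auto intro!: derivative_eq_intros DERIV_phi[OF t] DERIV_dphi[OF t] simp: field_simps power2_eq_square)
qed

lemma DERIV_Gam4: "t \<in> I \<Longrightarrow> (Gam4 has_real_derivative dGam4 t) (at t)"
proof -
  assume t: "t \<in> I"
  have "((\<lambda>t. - dzeta_coef t / (2 * dq_coef t)) has_real_derivative dGam4 t) (at t)"
    unfolding dGam4_def using dq_coef_pos[OF t]
    by (auto intro!: derivative_eq_intros DERIV_dzeta_coef[OF t] DERIV_dq_coef[OF t]
        simp: field_simps power2_eq_square)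
  then show ?thesis
    by (rule has_field_derivative_transform_within_open[OF _ open_I t])
      (simp add: Gam4_def deriv_zeta_coef)
qed

lemma DERIV_Gam5: "t \<in> I \<Longrightarrow> (Gam5 has_real_derivative dGam5 t) (at t)"
proof -
  assume t: "t \<in> I"
  have "((\<lambda>t. dzeta_coef t / (2 * zeta_coef t)) has_real_derivative dGam5 t) (at t)"
    unfolding dGam5_def using zeta_coef_pos[OF t]
    by (auto intro!: derivative_eq_intros DERIV_dzeta_coef[OF t] DERIV_zeta_coef[OF t]
        simp: field_simps power2_eq_square)
  then show ?thesis
    by (rule has_field_derivative_transform_within_open[OF _ open_I t])
      (simp add: Gam5_def deriv_zeta_coef)
qed

lemma DERIV_Gam6: "t \<in> I \<Longrightarrow> (Gam6 has_real_derivative dGam6 t) (at t)"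
proof -
  assume t: "t \<in> I"
  have "((\<lambda>t. ddq_coef t / (2 * dq_coef t)) has_real_derivative dGam6 t) (at t)"
    unfolding dGam6_def using dq_coef_pos[OF t]
    by (auto intro!: derivative_eq_intros DERIV_ddq_coef[OF t] DERIV_dq_coef[OF t]
        simp: field_simps power2_eq_square)
  then show ?thesis
    by (rule has_field_derivative_transform_within_open[OF _ open_I t])
      (simp add: Gam6_def deriv_dq_coef)
qed

lemmas DERIV_Gam = DERIV_Gam1 DERIV_Gam2 DERIV_Gam3 DERIV_Gam4 DERIV_Gam5 DERIV_Gam6
lemmas Gam_differentiable = DERIV_Gam[THEN field_differentiable_if_has_derivative]
lemmas deriv_Gam = DERIV_Gam[THEN DERIV_imp_deriv]

section \<open>The complex structure\<close>

definition "inv_phipow t = 1 / phipow t"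

definition "heis_Jc p c b =
   (if b < n then (if c = n+b then 1 else 0) + p b * (if c = 2*n then 1 else 0) else 0)
 - (if n \<le> b \<and> b < 2*n then (if c = b - n then 1 else 0) else 0)
 - zeta_comp p b * inv_phipow (p (2*n+1)) * (if c = 2*n+1 then 1 else 0)
 - (if b = 2*n+1 then phipow (p (2*n+1)) * (if c = 2*n then 1 else 0) else (0::real))"

lemma heis_J_eq:
  assumes b: "b < 2*n+2"
  shows "heis_J n \<phi> p c b = heis_Jc p c b"
proof -
  have "(\<Sum>i<n. pair (2*n+2) (sigma_h i) (dvec b) * Y_h n p i c - pair (2*n+2) (rho_h n i) (dvec b) * X_h i c)
    = (\<Sum>i<n. (if i = b then (if c = n+b then 1 else 0) + p b * (if c = 2*n then 1 else 0) else 0)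
              - (if b = n + i then (if c = i then 1 else 0) else 0))"
    by (rule sum.cong[OF refl])
      (use b in \<open>simp add: pair_dvec sigma_h_def rho_h_def dvec_def Y_h_def X_h_def\<close>)
  also have "\<dots> = (if b < n then (if c = n+b then 1 else 0) + p b * (if c = 2*n then 1 else 0) else 0)
     - (if n \<le> b \<and> b < 2*n then (if c = b - n then 1 else 0) else 0)"
  proof -
    have "(\<Sum>i<n. (if b = n + i then (if c = i then 1 else 0) else (0::real)))
        = (\<Sum>i<n. if i = b - n then (if n \<le> b \<and> c = i then 1 else 0) else 0)"
      by (rule sum.cong[OF refl]) auto
    also have "\<dots> = (if n \<le> b \<and> b < 2*n then (if c = b - n then 1 else 0) else 0)"
      by (simp add: sum.delta) linarith
    finally show ?thesis by (simp add: sum_subtractf sum.delta')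
  qed
  finally show ?thesis
    unfolding heis_J_def Let_def
    using b by (simp add: pair_dvec heis_Jc_def inv_phipow_def zeta_h_eq dq_h_def dvec_def dqv_h_def
        Z_h_def phipow_def m_def qc_def)
qed

lemma inv_phipow_phipow:
  "t \<in> I \<Longrightarrow> inv_phipow t * phipow t = 1" "t \<in> I \<Longrightarrow> phipow t * inv_phipow t = 1"
  "t \<in> I \<Longrightarrow> inv_phipow t * (phipow t * x) = x" "t \<in> I \<Longrightarrow> phipow t * (inv_phipow t * x) = x"
  using phipow_pos[of t] by (auto simp: inv_phipow_def)

lemma heis_J_square:
  assumes q: "p (2*n+1) \<in> I" and ab: "a < 2*n+2" "b < 2*n+2"
  shows "(\<Sum>c<2*n+2. heis_J n \<phi> p a c * heis_J n \<phi> p c b) = (if a = b then -1 else 0)"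
proof -
  have P: "phipow (p (2*n+1)) > 0" "p (Suc (2*n)) \<in> I" using phipow_pos q by auto
  have "(\<Sum>c<2*n+2. heis_J n \<phi> p a c * heis_J n \<phi> p c b) = (\<Sum>c<2*n+2. heis_Jc p a c * heis_Jc p c b)"
    using ab by (intro sum.cong) (simp_all add: heis_J_eq)
  also have "\<dots> = (if a = b then -1 else 0)"
    unfolding sum_heis_index_split
    apply (rule heis_index_cases[OF ab(1)]; rule heis_index_cases[OF ab(2)])
    using P apply (simp_all add: heis_Jc_def zeta_comp_def sum_normalize inv_phipow_phipow)
    done
  finally show ?thesis .
qed

lemma heis_J_compatible:
  assumes q: "p (2*n+1) \<in> I" and ab: "a < 2*n+2" "b < 2*n+2"
  shows "(\<Sum>c<2*n+2. \<Sum>d<2*n+2. heis_J n \<phi> p c a * heis_J n \<phi> p d b * heis_metric n \<phi> p c d)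
       = heis_metric n \<phi> p a b"
proof -
  have P: "phipow (p (2*n+1)) > 0" "p (Suc (2*n)) \<in> I" using phipow_pos q by auto
  have "(\<Sum>c<2*n+2. \<Sum>d<2*n+2. heis_J n \<phi> p c a * heis_J n \<phi> p d b * heis_metric n \<phi> p c d)
      = (\<Sum>c<2*n+2. \<Sum>d<2*n+2. heis_Jc p c a * heis_Jc p d b * heis_metric n \<phi> p c d)"
    using ab by (simp add: heis_J_eq)
  also have "\<dots> = heis_metric n \<phi> p a b"
    unfolding sum_heis_index_split heis_metric_eq
    apply (rule heis_index_cases[OF ab(1)]; rule heis_index_cases[OF ab(2)])
    using P apply (simp_all add: heis_Jc_def zeta_comp_def sum_normalize zeta_coef_phipow
        dq_coef_phipow inv_phipow_phipow)
    using P apply (auto simp: inv_phipow_def)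
    done
  finally show ?thesis .
qed

lemma kaehler_form_heis:
  assumes q: "p (2*n+1) \<in> I" and ab: "a < 2*n+2" "b < 2*n+2"
  shows "kaehler_form (2*n+2) (heis_metric n \<phi>) (heis_J n \<phi>) p a b
       = ext_d (\<lambda>x c. \<phi> (qc n x) * zeta_h n x c) p a b"
proof -
  have P: "phipow (p (2*n+1)) > 0" "p (Suc (2*n)) \<in> I" using phipow_pos q by auto
  have "kaehler_form (2*n+2) (heis_metric n \<phi>) (heis_J n \<phi>) p a b
      = (\<Sum>c<2*n+2. heis_Jc p c a * heis_metric n \<phi> p c b)"
    unfolding kaehler_form_def using ab by (simp add: heis_J_eq)
  also have "\<dots> = ext_d (\<lambda>x c. \<phi> (qc n x) * zeta_h n x c) p a b"
    unfolding sum_heis_index_split heis_metric_eq ext_d_def zeta_h_eq qc_def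
    apply (rule heis_index_cases[OF ab(1)]; rule heis_index_cases[OF ab(2)])
    using P apply (simp_all add: heis_Jc_def zeta_comp_def sum_normalize zeta_coef_phipow
        dq_coef_phipow inv_phipow_phipow pd_differentiable_comp_coord pd_comp_coord
        coef_differentiable dphi_def cong: if_cong)
    done
  finally show ?thesis .
qed

lemma DERIV_inv_phipow: "t \<in> I \<Longrightarrow> (inv_phipow has_real_derivative - dphipow t / (phipow t)^2) (at t)"
proof -
  assume t: "t \<in> I"
  have "((\<lambda>t. 1 / phipow t) has_real_derivative - dphipow t / (phipow t)^2) (at t)"
    using phipow_pos[OF t] DERIV_phipow[OF t]
    by (auto intro!: derivative_eq_intros simp: field_simps power2_eq_square)
  then show ?thesis by (simp add: inv_phipow_def[abs_def])
qed

lemma phipow_differentiable: "t \<in> I \<Longrightarrow> phipow field_differentiable (at t)"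
  using DERIV_phipow field_differentiable_if_has_derivative by blast

lemma deriv_phipow: "t \<in> I \<Longrightarrow> deriv phipow t = dphipow t"
  using DERIV_phipow DERIV_imp_deriv by blast

lemma inv_phipow_differentiable: "t \<in> I \<Longrightarrow> inv_phipow field_differentiable (at t)"
  using DERIV_inv_phipow field_differentiable_if_has_derivative by blast

lemma deriv_inv_phipow: "t \<in> I \<Longrightarrow> deriv inv_phipow t = - dphipow t / (phipow t)^2"
  using DERIV_inv_phipow DERIV_imp_deriv by blast

lemma nabla_heis_J:
  assumes q: "p (2*n+1) \<in> I" and abc: "a < 2*n+2" "c < 2*n+2" "b < 2*n+2"
  shows "nabla_J (2*n+2) (heis_metric n \<phi>) (heis_J n \<phi>) a c b p = 0"
proof -
  have P: "phipow (p (2*n+1)) > 0" "p (Suc (2*n)) \<in> I" "phipow (p (Suc (2*n))) > 0"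
    "\<phi> (p (Suc (2*n))) > 0" "dphi (p (Suc (2*n))) > 0"
    using phipow_pos q phi_pos dphi_pos by auto
  have "nabla_J (2*n+2) (heis_metric n \<phi>) (heis_J n \<phi>) a c b p
     = pd a (\<lambda>x. heis_Jc x c b) p + (\<Sum>d<2*n+2. heis_Gamma p c a d * heis_Jc p d b)
       - (\<Sum>d<2*n+2. heis_Gamma p d a b * heis_Jc p c d)"
    unfolding nabla_J_def using abc christoffel_heis[of p, OF q]
    by (simp add: heis_J_eq)
  also have "\<dots> = 0"
    unfolding sum_heis_index_split
    apply (rule heis_index_cases[OF abc(1)]; rule heis_index_cases[OF abc(2)];
        rule heis_index_cases[OF abc(3)])
    using P apply (simp_all add: heis_Jc_def zeta_comp_def heis_Gamma_def Let_def sum_normalize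
        pd_differentiable_comp_coord pd_comp_coord phipow_differentiable deriv_phipow
        inv_phipow_differentiable deriv_inv_phipow cong: if_cong)
    using P apply (auto simp: Gam1_def Gam2_def Gam3_def Gam4_def Gam5_def Gam6_def zeta_coef_phipow
        dq_coef_phipow inv_phipow_def dphipow_def deriv_zeta_coef deriv_dq_coef dzeta_coef_def
        ddq_coef_def field_simps power2_eq_square)
    done
  finally show ?thesis .
qed

lemma heis_metric_quadratic_form:
  fixes v p :: "nat \<Rightarrow> real"
  defines "Z \<equiv> (\<Sum>b<2*n+2. zeta_comp p b * v b)"
  shows "(\<Sum>a<2*n+2. \<Sum>b<2*n+2. heis_metric n \<phi> p a b * v a * v b)
     = \<phi> (p (2*n+1)) * (\<Sum>a<2*n. v a * v a) + zeta_coef (p (2*n+1)) * (Z * Z)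
       + dq_coef (p (2*n+1)) * (v (2*n+1) * v (2*n+1))"
proof -
  let ?q = "p (2*n+1)"
  have row: "(\<Sum>b<2*n+2. heis_metric n \<phi> p a b * v a * v b)
      = \<phi> ?q * (if a < 2*n then v a * v a else 0) + zeta_coef ?q * (zeta_comp p a * v a * Z)
        + dq_coef ?q * (if a = 2*n+1 then v a * v a else 0)" for a
  proof -
    have "(\<Sum>b<2*n+2. heis_metric n \<phi> p a b * v a * v b)
      = (\<Sum>b<2*n+2. (if b = a then \<phi> ?q * (if a < 2*n then v a * v a else 0) else 0)
          + zeta_coef ?q * (zeta_comp p a * v a) * (zeta_comp p b * v b)
          + (if b = a then dq_coef ?q * (if a = 2*n+1 then v a * v a else 0) else 0))"
      by (rule sum.cong[OF refl]) (auto simp: heis_metric_eq algebra_simps)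
    also have "\<dots> = (if a < 2*n+2 then \<phi> ?q * (if a < 2*n then v a * v a else 0) else 0)
        + zeta_coef ?q * (zeta_comp p a * v a) * Z
        + (if a < 2*n+2 then dq_coef ?q * (if a = 2*n+1 then v a * v a else 0) else 0)"
      by (simp add: sum.distrib sum.delta Z_def sum_distrib_left del: sum.lessThan_Suc)
    finally show ?thesis by auto
  qed
  have "(\<Sum>a<2*n+2. \<Sum>b<2*n+2. heis_metric n \<phi> p a b * v a * v b)
     = \<phi> ?q * (\<Sum>a<2*n+2. if a < 2*n then v a * v a else 0)
       + zeta_coef ?q * ((\<Sum>a<2*n+2. zeta_comp p a * v a) * Z)
       + dq_coef ?q * (\<Sum>a<2*n+2. if a = 2*n+1 then v a * v a else 0)"
    unfolding row
    by (simp add: sum.distrib sum_distrib_left sum_distrib_right mult.assoc if_zero_mult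
        mult_if_zero sum.delta sum.delta' del: sum.lessThan_Suc)
  also have "(\<Sum>a<2*n+2. if a < 2*n then v a * v a else 0) = (\<Sum>a<2*n. v a * v a)"
    by simp
  also have "(\<Sum>a<2*n+2. if a = 2*n+1 then v a * v a else 0) = v (2*n+1) * v (2*n+1)"
    by (simp add: sum.delta')
  finally show ?thesis unfolding Z_def by simp
qed

lemma heis_metric_pos_def:
  fixes v :: "nat \<Rightarrow> real"
  assumes q: "p (2*n+1) \<in> I" and v: "\<exists>a<2*n+2. v a \<noteq> 0"
  shows "(\<Sum>a<2*n+2. \<Sum>b<2*n+2. heis_metric n \<phi> p a b * v a * v b) > 0"
proof -
  let ?q = "p (2*n+1)"
  define Z where "Z = (\<Sum>b<2*n+2. zeta_comp p b * v b)"
  define S where "S = (\<Sum>a<2*n. v a * v a)"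
  have P: "\<phi> ?q > 0" "zeta_coef ?q > 0" "dq_coef ?q > 0"
    using q phi_pos zeta_coef_pos dq_coef_pos by auto
  have S: "S \<ge> 0" unfolding S_def by (intro sum_nonneg) simp
  have form: "(\<Sum>a<2*n+2. \<Sum>b<2*n+2. heis_metric n \<phi> p a b * v a * v b)
     = \<phi> ?q * S + zeta_coef ?q * (Z * Z) + dq_coef ?q * (v (2*n+1) * v (2*n+1))"
    unfolding heis_metric_quadratic_form Z_def S_def ..
  have terms: "\<phi> ?q * S \<ge> 0" "zeta_coef ?q * (Z * Z) \<ge> 0" "dq_coef ?q * (v (2*n+1) * v (2*n+1)) \<ge> 0"
    using P S by simp_all
  consider "S > 0" | "v (2*n+1) \<noteq> 0" | "S = 0" "v (2*n+1) = 0" using S by linarith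
  then show ?thesis
  proof cases
    case 1
    then have "\<phi> ?q * S > 0" using P by simp
    then show ?thesis unfolding form using terms by linarith
  next
    case 2
    then have "dq_coef ?q * (v (2*n+1) * v (2*n+1)) > 0"
      using P by (simp add: zero_less_mult_iff) linarith
    then show ?thesis unfolding form using terms by linarith
  next
    case 3
    text \<open>Only the \<open>\<partial>\<^sub>z\<close>-component of \<open>v\<close> survives, and \<open>\<zeta>(\<partial>\<^sub>z) = -1\<close> detects it.\<close>
    have v0: "\<forall>a<2*n. v a = 0"
      using 3(1) unfolding S_def by (subst (asm) sum_nonneg_eq_0_iff) auto
    obtain a where a: "a < 2*n+2" "v a \<noteq> 0" using v by blast
    have "a = 2*n"
    proof (rule ccontr)
      assume "a \<noteq> 2*n"
      then have "a < 2*n \<or> a = 2*n+1" using a(1) by linarith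
      then show False using a(2) v0 3(2) by auto
    qed
    with a have "v (2*n) \<noteq> 0" by simp
    moreover have "Z = (\<Sum>b<2*n. zeta_comp p b * v b) + zeta_comp p (2*n) * v (2*n)
        + zeta_comp p (2*n+1) * v (2*n+1)"
      unfolding Z_def by simp
    then have "Z = - v (2*n)"
      using v0 3(2) by (simp add: zeta_comp_def)
    ultimately have "Z * Z > 0"
      by (metis not_real_square_gt_zero neg_equal_0_iff_equal)
    then have "zeta_coef ?q * (Z * Z) > 0" using P by simp
    then show ?thesis unfolding form using terms by linarith
  qed
qed

lemma heis_is_kaehler: "is_kaehler (2*n+2) {p. qc n p \<in> I} (heis_metric n \<phi>) (heis_J n \<phi>)"
  unfolding is_kaehler_def qc_def
  using heis_metric_sym heis_metric_pos_def heis_J_square heis_J_compatible nabla_heis_J by auto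

section \<open>Ricci tensor and Hessian of the potential\<close>

lemma ricci_heis_sum:
  assumes q: "p (2*n+1) \<in> I" and bc: "b < 2*n+2" "c < 2*n+2"
  shows "ricci (2*n+2) (heis_metric n \<phi>) p b c =
     (\<Sum>a<2*n+2. pd a (\<lambda>x. heis_Gamma x a b c) p) - (\<Sum>a<2*n+2. pd c (\<lambda>x. heis_Gamma x a a b) p)
   + (\<Sum>a<2*n+2. \<Sum>d<2*n+2. heis_Gamma p a a d * heis_Gamma p d b c - heis_Gamma p a c d * heis_Gamma p d a b)"
proof -
  let ?\<Gamma> = "christoffel (2*n+2) (heis_metric n \<phi>)"
  have "pd e (\<lambda>x. ?\<Gamma> a b' c' x) p = pd e (\<lambda>x. heis_Gamma x a b' c') p"
    if "a < 2*n+2" "b' < 2*n+2" "c' < 2*n+2" for a b' c' e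
    by (rule pd_cong_open[of I p "2*n+1", OF open_I q]) (use that christoffel_heis in auto)
  moreover have "?\<Gamma> a b' c' p = heis_Gamma p a b' c'"
    if "a < 2*n+2" "b' < 2*n+2" "c' < 2*n+2" for a b' c'
    using christoffel_heis[of p, OF q that] .
  ultimately show ?thesis
    unfolding ricci_def using bc by (intro arg_cong2[where f="(+)"] arg_cong2[where f="(-)"] sum.cong) auto
qed

lemma pd_potential:
  "x (2*n+1) \<in> I \<Longrightarrow>
     pd b (\<lambda>x. k * \<phi> (qc n x)) x = (if b = 2*n+1 then k * dphi (x (2*n+1)) else 0)"
  unfolding qc_def using phi_differentiable[of "x (2*n+1)"]
  by (simp add: pd_differentiable_comp_coord pd_comp_coord dphi_def)

lemma hessian_heis:
  assumes q: "p (2*n+1) \<in> I" and ab: "a < 2*n+2" "b < 2*n+2"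
  shows "hessian (2*n+2) (heis_metric n \<phi>) (\<lambda>x. k * \<phi> (qc n x)) p a b
     = (if a = 2*n+1 \<and> b = 2*n+1 then k * ddphi (p (2*n+1)) else 0)
       - heis_Gamma p (2*n+1) a b * (k * dphi (p (2*n+1)))"
proof -
  have "pd a (\<lambda>x. pd b (\<lambda>x. k * \<phi> (qc n x)) x) p
      = pd a (\<lambda>x. if b = 2*n+1 then k * dphi (x (2*n+1)) else 0) p"
    by (rule pd_cong_open[of I p "2*n+1", OF open_I q]) (simp add: pd_potential)
  also have "\<dots> = (if a = 2*n+1 \<and> b = 2*n+1 then k * ddphi (p (2*n+1)) else 0)"
    using dphi_differentiable[OF q] by (simp add: pd_differentiable_comp_coord pd_comp_coord ddphi_def)
  finally have second: "pd a (\<lambda>x. pd b (\<lambda>x. k * \<phi> (qc n x)) x) p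
      = (if a = 2*n+1 \<and> b = 2*n+1 then k * ddphi (p (2*n+1)) else 0)" .
  have "(\<Sum>c<2*n+2. christoffel (2*n+2) (heis_metric n \<phi>) c a b p * pd c (\<lambda>x. k * \<phi> (qc n x)) p)
     = christoffel (2*n+2) (heis_metric n \<phi>) (2*n+1) a b p * (k * dphi (p (2*n+1)))"
    by (simp add: pd_potential[of p, OF q] mult_if_zero sum.delta' del: sum.lessThan_Suc)
  moreover have "christoffel (2*n+2) (heis_metric n \<phi>) (2*n+1) a b p = heis_Gamma p (2*n+1) a b"
    using christoffel_heis[of p "2*n+1" a b, OF q _ ab] by simp
  ultimately show ?thesis unfolding hessian_def second by simp
qed

end

section \<open>The soliton equation\<close>

locale heisenberg_soliton = heisenberg_profile +
  fixes lam k :: real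
  assumes ode: "\<forall>q\<in>I. deriv (deriv (\<lambda>t. (\<phi> t)\<^sup>2)) q / deriv (\<lambda>t. (\<phi> t)\<^sup>2) q
                 = - 2 * lam * \<phi> q ^ n + k * deriv \<phi> q"
begin

lemma deriv_phi_sq: "t \<in> I \<Longrightarrow> deriv (\<lambda>t. (\<phi> t)\<^sup>2) t = 2 * \<phi> t * dphi t"
  by (rule DERIV_imp_deriv) (auto intro!: derivative_eq_intros DERIV_phi)

lemma deriv2_phi_sq:
  "t \<in> I \<Longrightarrow> deriv (deriv (\<lambda>t. (\<phi> t)\<^sup>2)) t = 2 * dphi t * dphi t + 2 * \<phi> t * ddphi t"
proof -
  assume t: "t \<in> I"
  have "((\<lambda>t. 2 * \<phi> t * dphi t) has_real_derivative 2 * dphi t * dphi t + 2 * \<phi> t * ddphi t) (at t)"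
    by (auto intro!: derivative_eq_intros DERIV_phi[OF t] DERIV_dphi[OF t] simp: algebra_simps)
  then have "(deriv (\<lambda>t. (\<phi> t)\<^sup>2) has_real_derivative 2 * dphi t * dphi t + 2 * \<phi> t * ddphi t) (at t)"
    by (rule has_field_derivative_transform_within_open[OF _ open_I t]) (simp add: deriv_phi_sq)
  then show ?thesis using DERIV_imp_deriv by blast
qed

text \<open>The ODE expresses \<open>\<phi>''\<close>, and by differentiation \<open>\<phi>'''\<close>, through \<open>\<phi>\<close> and \<open>\<phi>'\<close>.\<close>

definition "ddphi_ode t = dphi t * (- 2 * lam * \<phi> t * phipow t + k * dphi t) - dphi t ^ 2 / \<phi> t"

definition "dddphi_ode t = ddphi t * (- 2 * lam * \<phi> t * phipow t + k * dphi t)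
   + dphi t * (- 2 * lam * (dphi t * phipow t + \<phi> t * dphipow t) + k * ddphi t)
   - (2 * dphi t * ddphi t * \<phi> t - dphi t ^ 2 * dphi t) / \<phi> t ^ 2"

lemma ddphi_eq_ode: "t \<in> I \<Longrightarrow> ddphi t = ddphi_ode t"
proof -
  assume t: "t \<in> I"
  have "(2 * dphi t * dphi t + 2 * \<phi> t * ddphi t) / (2 * \<phi> t * dphi t)
      = - 2 * lam * (\<phi> t * phipow t) + k * dphi t"
    using ode t by (simp add: deriv2_phi_sq deriv_phi_sq phi_pow_n dphi_def)
  then show ?thesis
    using phi_pos[OF t] dphi_pos[OF t] by (simp add: ddphi_ode_def field_simps power2_eq_square)
qed

lemma dddphi_eq_ode: "t \<in> I \<Longrightarrow> dddphi t = dddphi_ode t"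
proof -
  assume t: "t \<in> I"
  have "(ddphi_ode has_real_derivative dddphi_ode t) (at t)"
    unfolding ddphi_ode_def[abs_def] dddphi_ode_def
    using phi_pos[OF t] dphi_pos[OF t]
    by (auto intro!: derivative_eq_intros DERIV_phi[OF t] DERIV_dphi[OF t] DERIV_phipow[OF t]
        simp: field_simps power2_eq_square)
  then have "(ddphi has_real_derivative dddphi_ode t) (at t)"
    by (rule has_field_derivative_transform_within_open[OF _ open_I t]) (simp add: ddphi_eq_ode)
  then show ?thesis using DERIV_ddphi[OF t] DERIV_unique by blast
qed

text \<open>The soliton equation reduces to these three scalar identities: on the horizontal
  block, on the \<open>ZZ\<close> entry and on the \<open>\<partial>\<^sub>q\<partial>\<^sub>q\<close> entry.\<close>

lemmas ode_simps = dzeta_coef_def ddzeta_coef_def ddq_coef_def dddq_coef_def dphipow_def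
  zeta_coef_phipow dq_coef_phipow dddphi_ode_def ddphi_ode_def real_m

lemma soliton_identity_horizontal:
  assumes t: "t \<in> I"
  shows "deriv Gam1 t = lam * \<phi> t
     - (2 * real n * Gam3 t * Gam1 t + Gam5 t * Gam1 t + Gam6 t * Gam1 t - Gam2 t
        - 2 * Gam3 t * Gam1 t - Gam1 t * (k * dphi t))"
  using phi_pos[OF t] dphi_pos[OF t] phipow_pos[OF t]
  unfolding deriv_Gam[OF t] Gam1_def Gam2_def Gam3_def Gam5_def Gam6_def dGam1_def
    deriv_zeta_coef[OF t] deriv_dq_coef[OF t]
  by (simp add: ode_simps dddphi_eq_ode[OF t] ddphi_eq_ode[OF t] field_simps power2_eq_square)

lemma soliton_identity_vertical:
  assumes t: "t \<in> I"
  shows "deriv Gam4 t = lam * zeta_coef t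
     - (2 * real n * Gam2 t * Gam2 t + 2 * real n * Gam3 t * Gam4 t + Gam6 t * Gam4 t
        - Gam4 t * Gam5 t - Gam4 t * (k * dphi t))"
  using phi_pos[OF t] dphi_pos[OF t] phipow_pos[OF t]
  unfolding deriv_Gam[OF t] Gam2_def Gam3_def Gam4_def Gam5_def Gam6_def dGam4_def
    deriv_zeta_coef[OF t] deriv_dq_coef[OF t]
  by (simp add: ode_simps dddphi_eq_ode[OF t] ddphi_eq_ode[OF t] field_simps power2_eq_square)

lemma soliton_identity_radial:
  assumes t: "t \<in> I"
  shows "deriv Gam5 t = - 2 * real n * deriv Gam3 t + 2 * real n * Gam3 t * Gam6 t
     - 2 * real n * Gam3 t * Gam3 t + Gam5 t * Gam6 t - Gam5 t * Gam5 t + k * ddphi t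
     - Gam6 t * (k * dphi t) - lam * dq_coef t"
  using phi_pos[OF t] dphi_pos[OF t] phipow_pos[OF t]
  unfolding deriv_Gam[OF t] Gam3_def Gam5_def Gam6_def dGam3_def dGam5_def
    deriv_zeta_coef[OF t] deriv_dq_coef[OF t]
  by (simp add: ode_simps dddphi_eq_ode[OF t] ddphi_eq_ode[OF t] field_simps power2_eq_square)

lemma ricci_hessian_heis:
  assumes q: "p (2*n+1) \<in> I" and bc: "b < 2*n+2" "c < 2*n+2"
  shows "ricci (2*n+2) (heis_metric n \<phi>) p b c
           + hessian (2*n+2) (heis_metric n \<phi>) (\<lambda>x. k * \<phi> (qc n x)) p b c
         = lam * heis_metric n \<phi> p b c"
proof -
  have q': "p (Suc (2*n)) \<in> I" using q by simp
  show ?thesis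
    unfolding ricci_heis_sum[of p, OF q bc] hessian_heis[of p, OF q bc] sum_heis_index_split
      heis_metric_eq
    apply (rule heis_index_cases[OF bc(1)]; rule heis_index_cases[OF bc(2)])
    using q' apply (simp_all add: heis_Gamma_def Let_def pd_differentiable_comp_coord pd_comp_coord
        Gam_differentiable sum_normalize zeta_comp_def cong: if_cong)
    using q' apply (simp_all add: soliton_identity_horizontal soliton_identity_vertical
        soliton_identity_radial algebra_simps)
    done
qed

end

theorem mainTheorem4:
  fixes n :: nat and lam k :: real and \<phi> :: "real \<Rightarrow> real" and I :: "real set"
  assumes "n \<ge> 1"
    and "open I" and "is_interval I" and "I \<noteq> {}"
    and "smooth_on I \<phi>"
    and "\<forall>q\<in>I. \<phi> q > 0 \<and> deriv \<phi> q > 0"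
    and "\<forall>q\<in>I. deriv (deriv (\<lambda>t. (\<phi> t)\<^sup>2)) q / deriv (\<lambda>t. (\<phi> t)\<^sup>2) q
                 = - 2 * lam * \<phi> q ^ n + k * deriv \<phi> q"
  shows "is_kaehler (2*n+2) {p. qc n p \<in> I} (heis_metric n \<phi>) (heis_J n \<phi>)
       \<and> (\<forall>p. qc n p \<in> I \<longrightarrow> (\<forall>a<2*n+2. \<forall>b<2*n+2.
            kaehler_form (2*n+2) (heis_metric n \<phi>) (heis_J n \<phi>) p a b
              = ext_d (\<lambda>x c. \<phi> (qc n x) * zeta_h n x c) p a b))
       \<and> (\<forall>p. qc n p \<in> I \<longrightarrow> (\<forall>a<2*n+2. \<forall>b<2*n+2.
            ricci (2*n+2) (heis_metric n \<phi>) p a b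
              + hessian (2*n+2) (heis_metric n \<phi>) (\<lambda>x. k * \<phi> (qc n x)) p a b
              = lam * heis_metric n \<phi> p a b))"
proof -
  interpret heisenberg_soliton n \<phi> I lam k
    using assms by unfold_locales auto
  show ?thesis
    using heis_is_kaehler kaehler_form_heis ricci_hessian_heis by (auto simp: qc_def)
qed

end
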